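(* Let $(f_n)$ be a sequence of finitary Boolean functions. The following are equivalent: (1) there exists a sequence of integers $r_n\to\infty$ such that for every integer sequence $(m_n)$ with $m_n\ge r_n$ for all $n$, the sequence $(B_{m_n}f_n)_n$ is noise sensitive; (2) $(f_n)$ is noise sensitive.
   Context: Let $\Omega=\{-1,1\}$ and $\Omega^\infty=\{-1,1\}^{\mathbb N}$ with the uniform product probability measure; $\omega$ denotes a uniformly random element. A Boolean function is a measurable map $f:\Omega^\infty\to\Omega$. A set $W\subseteq\mathbb N$ is a witness set for $f$ at $\omega$ if there is an event $A$ with $\mathbb P(A)=1$ such that for all $\tilde\omega\in A$: if $\tilde\omega_i=\omega_i$ for all $i\in W$ then $f(\tilde\omega)=f(\omega)$. $f$ is finitary if almost surely a finite witness set exists; then $W(f)(\omega)$ denotes the least finite witness set in the order: smaller maximum first, then smaller cardinality, then lexicographic. $B_mf=\mathbf 1_{\{W(f)\subseteq[m]\}}f-\mathbf 1_{\{W(f)\not\subseteq[m]\}}$. For $\epsilon\in[0,1]$, $\omega^\epsilon$ is obtained from $\omega$ by, independently for each coordinate, with probability $\epsilon$ replacing $\omega_i$ by a fresh uniform bit. A sequence $(g_n)$ of Boolean functions is noise sensitive if for every $\epsilon\in(0,1]$, $\mathbb E[g_n(\omega)g_n(\omega^\epsilon)]-\mathbb E[g_n(\omega)]^2\to0$. *)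

theory Defs
  imports "HOL-Probability.Probability"
begin

text \<open>Encoding: the two-point set {-1,1} is represented by bool, True = 1, False = -1.
  Coordinates are indexed by nat (starting at 0), so [m] = {..<m}.\<close>

definition pm :: "bool \<Rightarrow> real" where
  "pm b = (if b then 1 else -1)"

definition Omega :: "(nat \<Rightarrow> bool) measure" where
  "Omega = PiM UNIV (\<lambda>_. measure_pmf (pmf_of_set (UNIV :: bool set)))"

definition boolean_fun :: "((nat \<Rightarrow> bool) \<Rightarrow> bool) \<Rightarrow> bool" where
  "boolean_fun f \<longleftrightarrow> f \<in> Omega \<rightarrow>\<^sub>M count_space UNIV"

definition witness_set :: "((nat \<Rightarrow> bool) \<Rightarrow> bool) \<Rightarrow> nat set \<Rightarrow> (nat \<Rightarrow> bool) \<Rightarrow> bool" where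
  "witness_set f W \<omega> \<longleftrightarrow>
     (\<exists>A \<in> sets Omega. measure Omega A = 1 \<and>
        (\<forall>\<omega>' \<in> A. (\<forall>i \<in> W. \<omega>' i = \<omega> i) \<longrightarrow> f \<omega>' = f \<omega>))"

definition finitary :: "((nat \<Rightarrow> bool) \<Rightarrow> bool) \<Rightarrow> bool" where
  "finitary f \<longleftrightarrow> (AE \<omega> in Omega. \<exists>W. finite W \<and> witness_set f W \<omega>)"

definition max_key :: "nat set \<Rightarrow> nat" where
  "max_key W = (if W = {} then 0 else Suc (Max W))"

definition set_less :: "nat set \<Rightarrow> nat set \<Rightarrow> bool" where
  "set_less V W \<longleftrightarrow>
     max_key V < max_key W \<or>
     (max_key V = max_key W \<and>
       (card V < card W \<or>
        (card V = card W \<and>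
          (sorted_list_of_set V, sorted_list_of_set W) \<in> lexord {(a, b). a < b})))"

text \<open>Least finite witness set W(f)(omega); on the (null) event where no finite
  witness set exists we use the default UNIV.\<close>
definition least_witness :: "((nat \<Rightarrow> bool) \<Rightarrow> bool) \<Rightarrow> (nat \<Rightarrow> bool) \<Rightarrow> nat set" where
  "least_witness f \<omega> =
     (if \<exists>W. finite W \<and> witness_set f W \<omega>
      then (THE W. finite W \<and> witness_set f W \<omega> \<and>
              (\<forall>V. finite V \<and> witness_set f V \<omega> \<longrightarrow> V = W \<or> set_less W V))
      else UNIV)"

text \<open>B_m f = 1{W(f) \<subseteq> [m]} f - 1{W(f) not \<subseteq> [m]}  (False encodes -1).\<close>
definition B :: "nat \<Rightarrow> ((nat \<Rightarrow> bool) \<Rightarrow> bool) \<Rightarrow> (nat \<Rightarrow> bool) \<Rightarrow> bool" where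
  "B m f \<omega> = (if least_witness f \<omega> \<subseteq> {..<m} then f \<omega> else False)"

definition noise_pmf :: "real \<Rightarrow> (bool \<times> bool) pmf" where
  "noise_pmf \<epsilon> =
     do { x \<leftarrow> pmf_of_set (UNIV :: bool set);
          b \<leftarrow> bernoulli_pmf \<epsilon>;
          y \<leftarrow> pmf_of_set (UNIV :: bool set);
          return_pmf (x, if b then y else x) }"

definition Noise :: "real \<Rightarrow> (nat \<Rightarrow> bool \<times> bool) measure" where
  "Noise \<epsilon> = PiM UNIV (\<lambda>_. measure_pmf (noise_pmf \<epsilon>))"

definition noise_sensitive :: "(nat \<Rightarrow> (nat \<Rightarrow> bool) \<Rightarrow> bool) \<Rightarrow> bool" where
  "noise_sensitive g \<longleftrightarrow>
     (\<forall>\<epsilon>::real. 0 < \<epsilon> \<and> \<epsilon> \<le> 1 \<longrightarrow>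
        (\<lambda>n. (\<integral>x. pm (g n (\<lambda>i. fst (x i))) * pm (g n (\<lambda>i. snd (x i))) \<partial>Noise \<epsilon>)
              - (\<integral>\<omega>. pm (g n \<omega>) \<partial>Omega)\<^sup>2) \<longlonglongrightarrow> 0)"

end

theory Submission
  imports Defs "HOL-Library.List_Lexorder"
begin

text \<open>\<open>B\<^sub>m f\<close> and \<open>f\<close> agree unless \<open>f\<close> has no witness set inside \<open>[m]\<close>.
  For finitary \<open>f\<close> these bad events decrease to a null set, so their probability tends to 0.
  Since \<open>\<omega>\<close> and \<open>\<omega>\<^sup>\<epsilon>\<close> are both uniformly distributed, the noise covariance
  \<open>E[g(\<omega>) g(\<omega>\<^sup>\<epsilon>)] - E[g]\<^sup>2\<close> moves by at most 8 times the probability of the set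
  on which \<open>g\<close> is modified. Choosing \<open>r\<^sub>n\<close> so large that the bad event of \<open>f\<^sub>n\<close> has
  probability below \<open>1/(n+1)\<close> makes the covariances of \<open>B\<^bsub>m n\<^esub> f\<^sub>n\<close> and \<open>f\<^sub>n\<close>
  asymptotically equal whenever \<open>m n \<ge> r\<^sub>n\<close>, which gives both implications.\<close>

section \<open>Marginals of the noise measure\<close>

lemma map_fst_noise_pmf: "map_pmf fst (noise_pmf \<epsilon>) = pmf_of_set UNIV"
  unfolding noise_pmf_def by (simp add: map_bind_pmf bind_return_pmf' bind_pmf_const)

lemma map_snd_noise_pmf: "map_pmf snd (noise_pmf \<epsilon>) = pmf_of_set UNIV"
proof -
  have resample: "do {x \<leftarrow> pmf_of_set UNIV; y \<leftarrow> pmf_of_set UNIV; return_pmf (if b then y else x)}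
      = pmf_of_set (UNIV :: bool set)" for b :: bool
    by (cases b) (simp_all add: bind_return_pmf' bind_pmf_const)
  have "map_pmf snd (noise_pmf \<epsilon>) =
     do {b \<leftarrow> bernoulli_pmf \<epsilon>; x \<leftarrow> pmf_of_set UNIV; y \<leftarrow> pmf_of_set UNIV;
         return_pmf (if b then y else x)}"
    unfolding noise_pmf_def
    by (simp add: map_bind_pmf bind_commute_pmf[of "pmf_of_set UNIV" "bernoulli_pmf \<epsilon>"])
  then show ?thesis by (simp add: resample bind_pmf_const)
qed

lemma distr_PiM_pmf_coordinatewise:
  assumes "map_pmf g p = q"
  shows "distr (PiM UNIV (\<lambda>_. measure_pmf p)) (PiM UNIV (\<lambda>_. measure_pmf q)) (\<lambda>x i. g (x i))
       = PiM UNIV (\<lambda>_. measure_pmf q)"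
proof -
  interpret P: product_prob_space "\<lambda>_. measure_pmf p" UNIV
    by (rule product_prob_spaceI) (simp add: prob_space_measure_pmf)
  interpret Q: product_prob_space "\<lambda>_. measure_pmf q" UNIV
    by (rule product_prob_spaceI) (simp add: prob_space_measure_pmf)
  let ?P = "PiM UNIV (\<lambda>_. measure_pmf p)" and ?Q = "PiM UNIV (\<lambda>_. measure_pmf q)"
  have meas: "(\<lambda>x i. g (x i)) \<in> ?P \<rightarrow>\<^sub>M ?Q"
    by (rule measurable_PiM_single')
      (auto simp: space_PiM intro: measurable_compose[OF measurable_component_singleton])
  show ?thesis
  proof (rule Q.PiM_eq)
    fix J F assume J: "finite J" "J \<subseteq> UNIV" "\<And>j. j \<in> J \<Longrightarrow> F j \<in> sets (measure_pmf q)"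
    have preimage: "(\<lambda>x i. g (x i)) -` prod_emb UNIV (\<lambda>_. measure_pmf q) J (Pi\<^sub>E J F) \<inter> space ?P
       = prod_emb UNIV (\<lambda>_. measure_pmf p) J (Pi\<^sub>E J (\<lambda>j. g -` F j))"
      by (auto simp: prod_emb_def PiE_iff space_PiM)
    have "emeasure (distr ?P ?Q (\<lambda>x i. g (x i))) (prod_emb UNIV (\<lambda>_. measure_pmf q) J (Pi\<^sub>E J F))
      = emeasure ?P (prod_emb UNIV (\<lambda>_. measure_pmf p) J (Pi\<^sub>E J (\<lambda>j. g -` F j)))"
      unfolding preimage[symmetric] using meas J by (intro emeasure_distr) (auto intro!: sets_PiM_I)
    also have "\<dots> = (\<Prod>j\<in>J. emeasure (measure_pmf p) (g -` F j))"
      using J by (intro P.emeasure_PiM_emb) auto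
    also have "\<dots> = (\<Prod>j\<in>J. emeasure (measure_pmf q) (F j))"
      by (simp add: assms[symmetric])
    finally show "emeasure (distr ?P ?Q (\<lambda>x i. g (x i))) (prod_emb UNIV (\<lambda>_. measure_pmf q) J (Pi\<^sub>E J F))
      = (\<Prod>j\<in>J. emeasure (measure_pmf q) (F j))" .
  qed simp
qed

lemma space_Omega [simp]: "space Omega = UNIV"
  by (simp add: Omega_def space_PiM)

interpretation Omega: prob_space Omega
  unfolding Omega_def by (intro prob_space_PiM prob_space_measure_pmf)

lemma prob_space_Noise: "prob_space (Noise \<epsilon>)"
  unfolding Noise_def by (intro prob_space_PiM prob_space_measure_pmf)

lemma measurable_coordinate_Omega: "(\<lambda>\<omega>. \<omega> i) \<in> Omega \<rightarrow>\<^sub>M count_space UNIV"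
  unfolding Omega_def by (rule measurable_compose[OF measurable_component_singleton]) auto

lemma measurable_coordinatewise_Noise: "(\<lambda>x i. g (x i)) \<in> Noise \<epsilon> \<rightarrow>\<^sub>M Omega"
  unfolding Noise_def Omega_def by (rule measurable_PiM_single') (auto simp: space_PiM)

lemma distr_Noise_coordinatewise:
  assumes "map_pmf g (noise_pmf \<epsilon>) = pmf_of_set UNIV"
  shows "distr (Noise \<epsilon>) Omega (\<lambda>x i. g (x i)) = Omega"
  unfolding Noise_def Omega_def by (rule distr_PiM_pmf_coordinatewise[OF assms])

section \<open>The least witness set\<close>

definition set_key :: "nat set \<Rightarrow> nat list" where
  "set_key V = max_key V # card V # sorted_list_of_set V"

lemma set_less_iff_set_key_less: "set_less V W \<longleftrightarrow> set_key V < set_key W"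
  by (auto simp: set_less_def set_key_def list_less_def)

lemma set_key_inject: "finite V \<Longrightarrow> finite W \<Longrightarrow> set_key V = set_key W \<longleftrightarrow> V = W"
  by (auto simp: set_key_def dest: arg_cong[of _ _ set])

lemma subset_lessThan_iff_max_key_le: "finite V \<Longrightarrow> V \<subseteq> {..<m} \<longleftrightarrow> max_key V \<le> m"
  by (cases "V = {}") (auto simp: max_key_def Suc_le_eq Max_less_iff)

lemma set_less_imp_max_key_le: "set_less V W \<Longrightarrow> max_key V \<le> max_key W"
  by (auto simp: set_less_def)

lemma ex1_set_less_least:
  assumes "V\<^sub>0 \<in> S" and finite: "\<And>V. V \<in> S \<Longrightarrow> finite V"
  shows "\<exists>!L. L \<in> S \<and> (\<forall>V\<in>S. V = L \<or> set_less L V)"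
proof -
  \<comment> \<open>Only the finitely many subsets of \<open>{..<max_key V\<^sub>0}\<close> can precede \<open>V\<^sub>0\<close>.\<close>
  define S\<^sub>0 where "S\<^sub>0 = {V \<in> S. max_key V \<le> max_key V\<^sub>0}"
  have "S\<^sub>0 \<subseteq> Pow {..<max_key V\<^sub>0}"
  proof
    fix V assume "V \<in> S\<^sub>0"
    then have "finite V" "max_key V \<le> max_key V\<^sub>0"
      using finite by (auto simp: S\<^sub>0_def)
    then show "V \<in> Pow {..<max_key V\<^sub>0}"
      by (simp add: subset_lessThan_iff_max_key_le)
  qed
  then have "finite (set_key ` S\<^sub>0)"
    by (auto intro: finite_subset)
  moreover have "V\<^sub>0 \<in> S\<^sub>0"
    using assms by (simp add: S\<^sub>0_def)
  ultimately have "Min (set_key ` S\<^sub>0) \<in> set_key ` S\<^sub>0"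
    by (intro Min_in) auto
  then obtain L where "L \<in> S\<^sub>0" "set_key L = Min (set_key ` S\<^sub>0)"
    by (metis imageE)
  with \<open>finite (set_key ` S\<^sub>0)\<close> have L: "L \<in> S\<^sub>0" "\<And>V. V \<in> S\<^sub>0 \<Longrightarrow> set_key L \<le> set_key V"
    by auto
  have least: "V = L \<or> set_less L V" if "V \<in> S" for V
  proof (cases "V \<in> S\<^sub>0")
    case True
    then show ?thesis
      using L finite \<open>V \<in> S\<close> by (auto simp: S\<^sub>0_def set_less_iff_set_key_less order.order_iff_strict set_key_inject)
  next
    case False
    then show ?thesis
      using L that by (auto simp: S\<^sub>0_def set_less_def)
  qed
  show ?thesis
  proof (rule ex1I)
    show "L \<in> S \<and> (\<forall>V\<in>S. V = L \<or> set_less L V)"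
      using L least by (auto simp: S\<^sub>0_def)
    show "L' = L" if "L' \<in> S \<and> (\<forall>V\<in>S. V = L' \<or> set_less L' V)" for L'
    proof -
      have "L \<in> S" using L(1) by (simp add: S\<^sub>0_def)
      then show ?thesis
        using that least[of L'] by (metis set_less_iff_set_key_less order.asym)
    qed
  qed
qed

lemma least_witness_least:
  assumes "finite W" "witness_set f W \<omega>"
  shows "finite (least_witness f \<omega>)" "witness_set f (least_witness f \<omega>) \<omega>"
    and "W = least_witness f \<omega> \<or> set_less (least_witness f \<omega>) W"
proof -
  let ?least = "\<lambda>L. finite L \<and> witness_set f L \<omega> \<and>
      (\<forall>V. finite V \<and> witness_set f V \<omega> \<longrightarrow> V = L \<or> set_less L V)"
  have "\<exists>!L. L \<in> {V. finite V \<and> witness_set f V \<omega>} \<and>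
      (\<forall>V \<in> {V. finite V \<and> witness_set f V \<omega>}. V = L \<or> set_less L V)"
    using assms by (intro ex1_set_less_least) auto
  then have "\<exists>!L. ?least L"
    by (simp only: mem_Collect_eq Ball_def conj_assoc)
  then have "?least (THE L. ?least L)"
    by (rule theI')
  moreover have "least_witness f \<omega> = (THE L. ?least L)"
    unfolding least_witness_def using assms by (intro if_P) blast
  ultimately show "finite (least_witness f \<omega>)" "witness_set f (least_witness f \<omega>) \<omega>"
    and "W = least_witness f \<omega> \<or> set_less (least_witness f \<omega>) W"
    using assms by auto
qed

lemma least_witness_subset_iff:
  "least_witness f \<omega> \<subseteq> {..<m} \<longleftrightarrow> (\<exists>W \<subseteq> {..<m}. witness_set f W \<omega>)"
proof
  assume sub: "least_witness f \<omega> \<subseteq> {..<m}"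
  have "\<exists>W. finite W \<and> witness_set f W \<omega>"
  proof (rule ccontr)
    assume "\<nexists>W. finite W \<and> witness_set f W \<omega>"
    then have "least_witness f \<omega> = UNIV"
      unfolding least_witness_def by (intro if_not_P)
    with sub show False
      by auto
  qed
  then show "\<exists>W \<subseteq> {..<m}. witness_set f W \<omega>"
    using sub least_witness_least(2) by blast
next
  assume "\<exists>W \<subseteq> {..<m}. witness_set f W \<omega>"
  then obtain W where W: "W \<subseteq> {..<m}" "witness_set f W \<omega>" by blast
  then have "finite W"
    using finite_subset by blast
  have "max_key (least_witness f \<omega>) \<le> max_key W"
    using least_witness_least(3)[OF \<open>finite W\<close> W(2)] set_less_imp_max_key_le by auto
  also have "\<dots> \<le> m"
    using W(1) \<open>finite W\<close> by (simp add: subset_lessThan_iff_max_key_le)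
  finally show "least_witness f \<omega> \<subseteq> {..<m}"
    using least_witness_least(1)[OF \<open>finite W\<close> W(2)] by (simp add: subset_lessThan_iff_max_key_le)
qed

section \<open>Witness sets inside a prefix\<close>

lemma sets_if_saturated_countable:
  fixes g :: "'a \<Rightarrow> 'b::countable"
  assumes g: "g \<in> M \<rightarrow>\<^sub>M count_space UNIV" and "A \<subseteq> space M"
    and saturated: "\<And>x y. x \<in> A \<Longrightarrow> y \<in> space M \<Longrightarrow> g y = g x \<Longrightarrow> y \<in> A"
  shows "A \<in> sets M"
proof -
  have "A = g -` (g ` A) \<inter> space M"
    using assms by auto
  also have "\<dots> \<in> sets M"
    using g by (rule measurable_sets) simp
  finally show ?thesis .
qed

lemma measurable_Pair_count_space:
  fixes f :: "'a \<Rightarrow> 'b::countable" and g :: "'a \<Rightarrow> 'c::countable"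
  assumes "f \<in> M \<rightarrow>\<^sub>M count_space UNIV" "g \<in> M \<rightarrow>\<^sub>M count_space UNIV"
  shows "(\<lambda>x. (f x, g x)) \<in> M \<rightarrow>\<^sub>M count_space UNIV"
  using measurable_Pair[OF assms] by (simp add: pair_measure_countable)

lemma sets_coordinate_eq_Omega: "{\<omega> \<in> space Omega. \<omega> i = c} \<in> sets Omega"
  using measurable_sets[OF measurable_coordinate_Omega, of "{c}" i] by (simp add: vimage_def)

lemma measurable_prefix_Omega: "(\<lambda>\<omega>. map \<omega> [0..<m]) \<in> Omega \<rightarrow>\<^sub>M count_space UNIV"
proof (subst measurable_count_space_eq2_countable, intro conjI ballI)
  fix xs :: "bool list"
  have "map \<omega> [0..<m] = xs \<longleftrightarrow> length xs = m \<and> (\<forall>i\<in>{..<m}. \<omega> i = xs ! i)" for \<omega>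
    by (auto simp: list_eq_iff_nth_eq)
  then have "(\<lambda>\<omega>. map \<omega> [0..<m]) -` {xs} \<inter> space Omega
      = (if length xs = m then {\<omega> \<in> space Omega. \<forall>i\<in>{..<m}. \<omega> i = xs ! i} else {})"
    by auto
  also have "\<dots> \<in> sets Omega"
    using sets.sets_Collect_finite_All[OF sets_coordinate_eq_Omega finite_lessThan] by simp
  finally show "(\<lambda>\<omega>. map \<omega> [0..<m]) -` {xs} \<inter> space Omega \<in> sets Omega" .
qed auto

definition witness_event :: "((nat \<Rightarrow> bool) \<Rightarrow> bool) \<Rightarrow> nat \<Rightarrow> (nat \<Rightarrow> bool) set" where
  "witness_event f m = {\<omega>. \<exists>W \<subseteq> {..<m}. witness_set f W \<omega>}"

lemma B_eq_if_witness_event: "B m f \<omega> = (if \<omega> \<in> witness_event f m then f \<omega> else False)"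
  by (simp add: B_def witness_event_def least_witness_subset_iff)

lemma witness_set_cong:
  "(\<And>i. i \<in> W \<Longrightarrow> \<omega> i = \<omega>' i) \<Longrightarrow> f \<omega> = f \<omega>' \<Longrightarrow> witness_set f W \<omega> \<longleftrightarrow> witness_set f W \<omega>'"
  unfolding witness_set_def by simp

lemma sets_witness_event:
  assumes "boolean_fun f"
  shows "witness_event f m \<in> sets Omega"
  \<comment> \<open>Membership depends only on the prefix \<open>\<omega> | [m]\<close> and on the value \<open>f \<omega>\<close>.\<close>
proof (rule sets_if_saturated_countable[where g = "\<lambda>\<omega>. (map \<omega> [0..<m], f \<omega>)"])
  show "(\<lambda>\<omega>. (map \<omega> [0..<m], f \<omega>)) \<in> Omega \<rightarrow>\<^sub>M count_space UNIV"
    using measurable_prefix_Omega assms unfolding boolean_fun_def by (rule measurable_Pair_count_space)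
  show "witness_event f m \<subseteq> space Omega"
    by simp
  fix \<omega> \<omega>'
  assume "\<omega> \<in> witness_event f m" and "(map \<omega>' [0..<m], f \<omega>') = (map \<omega> [0..<m], f \<omega>)"
  then obtain W where W: "W \<subseteq> {..<m}" "witness_set f W \<omega>" and "\<forall>i<m. \<omega>' i = \<omega> i" "f \<omega>' = f \<omega>"
    by (auto simp: witness_event_def map_eq_conv)
  then have "witness_set f W \<omega>'"
    using witness_set_cong[of W \<omega>' \<omega> f] by auto
  with W(1) show "\<omega>' \<in> witness_event f m"
    by (auto simp: witness_event_def)
qed

lemma boolean_fun_B:
  assumes "boolean_fun f"
  shows "boolean_fun (B m f)"
  using assms sets_witness_event[OF assms]
  unfolding boolean_fun_def B_eq_if_witness_event by (intro measurable_If_set) auto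

lemma measure_not_witness_event_tendsto_0:
  assumes "boolean_fun f" "finitary f"
  shows "(\<lambda>m. measure Omega (- witness_event f m)) \<longlonglongrightarrow> 0"
proof -
  let ?N = "\<Inter>m. - witness_event f m"
  have "(\<lambda>m. measure Omega (- witness_event f m)) \<longlonglongrightarrow> measure Omega ?N"
  proof (rule Omega.finite_Lim_measure_decseq)
    show "range (\<lambda>m. - witness_event f m) \<subseteq> sets Omega"
      using sets.compl_sets[OF sets_witness_event[OF assms(1)]] by (auto simp: Compl_eq_Diff_UNIV)
    show "decseq (\<lambda>m. - witness_event f m)"
      by (auto simp: decseq_def witness_event_def) (meson lessThan_subset_iff order_trans)
  qed
  moreover have "measure Omega ?N = 0"
  proof -
    have "AE \<omega> in Omega. \<omega> \<notin> ?N"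
      using \<open>finitary f\<close> unfolding finitary_def
      by eventually_elim (auto simp: witness_event_def finite_nat_iff_bounded)
    then have "emeasure Omega {\<omega> \<in> space Omega. \<omega> \<in> ?N} = 0"
      by (rule emeasure_eq_0_AE)
    then have "emeasure Omega ?N = 0"
      by (simp only: space_Omega UNIV_I simp_thms Collect_mem_eq)
    then show ?thesis
      by (simp add: measure_def)
  qed
  ultimately show ?thesis
    by simp
qed

section \<open>Noise covariance\<close>

lemma abs_pm [simp]: "\<bar>pm b\<bar> = 1"
  by (simp add: pm_def)

lemma abs_pm_diff_le_indicator:
  "(\<And>\<omega>. g \<omega> \<noteq> h \<omega> \<Longrightarrow> \<omega> \<in> D) \<Longrightarrow> \<bar>pm (g \<omega>) - pm (h \<omega>)\<bar> \<le> 2 * indicator D \<omega>"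
  by (auto simp: pm_def indicator_def)

lemma abs_pm_mult_diff_le: "\<bar>pm a * pm b - pm c * pm d\<bar> \<le> \<bar>pm a - pm c\<bar> + \<bar>pm b - pm d\<bar>"
  by (simp add: pm_def)

lemma measurable_pm_boolean_fun:
  "boolean_fun g \<Longrightarrow> p \<in> M \<rightarrow>\<^sub>M Omega \<Longrightarrow> (\<lambda>x. pm (g (p x))) \<in> borel_measurable M"
  unfolding boolean_fun_def
  by (intro measurable_compose[OF measurable_compose[of p M Omega g] borel_measurable_count_space])

lemma integral_abs_pm_diff_le:
  assumes "prob_space M" and p: "p \<in> M \<rightarrow>\<^sub>M Omega" "distr M Omega p = Omega"
    and g: "boolean_fun g" and h: "boolean_fun h" and D: "D \<in> sets Omega"
    and differ: "\<And>\<omega>. g \<omega> \<noteq> h \<omega> \<Longrightarrow> \<omega> \<in> D"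
  shows "integrable M (\<lambda>x. \<bar>pm (g (p x)) - pm (h (p x))\<bar>)"
    and "(\<integral>x. \<bar>pm (g (p x)) - pm (h (p x))\<bar> \<partial>M) \<le> 2 * measure Omega D"
proof -
  interpret M: prob_space M by fact
  have indicator_measurable: "(\<lambda>x. indicator D (p x) :: real) \<in> borel_measurable M"
    using p(1) D by measurable
  show integrable: "integrable M (\<lambda>x. \<bar>pm (g (p x)) - pm (h (p x))\<bar>)"
    using measurable_pm_boolean_fun[OF g p(1)] measurable_pm_boolean_fun[OF h p(1)]
    by (intro M.integrable_const_bound[where B = 2] AE_I2) (auto simp: pm_def)
  have "(\<integral>x. \<bar>pm (g (p x)) - pm (h (p x))\<bar> \<partial>M) \<le> (\<integral>x. 2 * indicator D (p x) \<partial>M)"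
  proof (rule integral_mono[OF integrable])
    show "integrable M (\<lambda>x. 2 * indicator D (p x) :: real)"
      using indicator_measurable by (intro M.integrable_const_bound[where B = 2] AE_I2) auto
    show "\<bar>pm (g (p x)) - pm (h (p x))\<bar> \<le> 2 * indicator D (p x)" for x
      using abs_pm_diff_le_indicator[of g h D, OF differ] by blast
  qed
  also have "\<dots> = 2 * (\<integral>\<omega>. indicator D \<omega> \<partial>distr M Omega p)"
    using D by (subst integral_distr[OF p(1)]) auto
  also have "\<dots> = 2 * measure Omega D"
    using D p(2) by simp
  finally show "(\<integral>x. \<bar>pm (g (p x)) - pm (h (p x))\<bar> \<partial>M) \<le> 2 * measure Omega D" .
qed

lemma abs_integral_pm_diff_le:
  assumes "boolean_fun g" "boolean_fun h" "D \<in> sets Omega" "\<And>\<omega>. g \<omega> \<noteq> h \<omega> \<Longrightarrow> \<omega> \<in> D"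
  shows "\<bar>(\<integral>\<omega>. pm (g \<omega>) \<partial>Omega) - (\<integral>\<omega>. pm (h \<omega>) \<partial>Omega)\<bar> \<le> 2 * measure Omega D"
proof -
  note bound = integral_abs_pm_diff_le[OF Omega.prob_space_axioms measurable_ident_sets[OF refl] distr_id assms]
  have "integrable Omega (\<lambda>\<omega>. pm (k \<omega>))" if "boolean_fun k" for k
    using measurable_pm_boolean_fun[OF that measurable_ident_sets[OF refl]]
    by (intro Omega.integrable_const_bound[where B = 1]) auto
  then have "(\<integral>\<omega>. pm (g \<omega>) \<partial>Omega) - (\<integral>\<omega>. pm (h \<omega>) \<partial>Omega) = (\<integral>\<omega>. pm (g \<omega>) - pm (h \<omega>) \<partial>Omega)"
    using assms by simp
  also have "\<bar>\<dots>\<bar> \<le> (\<integral>\<omega>. \<bar>pm (g \<omega>) - pm (h \<omega>)\<bar> \<partial>Omega)"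
    by (rule integral_abs_bound)
  also have "\<dots> \<le> 2 * measure Omega D"
    using bound(2) .
  finally show ?thesis .
qed

lemma abs_integral_noise_correlation_diff_le:
  assumes g: "boolean_fun g" and h: "boolean_fun h" and D: "D \<in> sets Omega"
    and differ: "\<And>\<omega>. g \<omega> \<noteq> h \<omega> \<Longrightarrow> \<omega> \<in> D"
  shows "\<bar>(\<integral>x. pm (g (\<lambda>i. fst (x i))) * pm (g (\<lambda>i. snd (x i))) \<partial>Noise \<epsilon>)
        - (\<integral>x. pm (h (\<lambda>i. fst (x i))) * pm (h (\<lambda>i. snd (x i))) \<partial>Noise \<epsilon>)\<bar>
      \<le> 4 * measure Omega D"
proof -
  interpret N: prob_space "Noise \<epsilon>"
    by (rule prob_space_Noise)
  note fst_bound = integral_abs_pm_diff_le[OF prob_space_Noise[of \<epsilon>] measurable_coordinatewise_Noise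
      distr_Noise_coordinatewise[OF map_fst_noise_pmf] assms]
  note snd_bound = integral_abs_pm_diff_le[OF prob_space_Noise[of \<epsilon>] measurable_coordinatewise_Noise
      distr_Noise_coordinatewise[OF map_snd_noise_pmf] assms]
  have integrable: "integrable (Noise \<epsilon>) (\<lambda>x. pm (k (\<lambda>i. fst (x i))) * pm (k (\<lambda>i. snd (x i))))"
    if "boolean_fun k" for k
    using measurable_pm_boolean_fun[OF that measurable_coordinatewise_Noise]
    by (intro N.integrable_const_bound[where B = 1] AE_I2) (auto simp: abs_mult)
  let ?G = "\<lambda>x. pm (g (\<lambda>i. fst (x i))) * pm (g (\<lambda>i. snd (x i)))"
  let ?H = "\<lambda>x. pm (h (\<lambda>i. fst (x i))) * pm (h (\<lambda>i. snd (x i)))"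
  have "(\<integral>x. ?G x \<partial>Noise \<epsilon>) - (\<integral>x. ?H x \<partial>Noise \<epsilon>) = (\<integral>x. ?G x - ?H x \<partial>Noise \<epsilon>)"
    using integrable[OF g] integrable[OF h] by simp
  also have "\<bar>\<dots>\<bar> \<le> (\<integral>x. \<bar>?G x - ?H x\<bar> \<partial>Noise \<epsilon>)"
    by (rule integral_abs_bound)
  also have "\<dots> \<le> (\<integral>x. \<bar>pm (g (\<lambda>i. fst (x i))) - pm (h (\<lambda>i. fst (x i)))\<bar>
      + \<bar>pm (g (\<lambda>i. snd (x i))) - pm (h (\<lambda>i. snd (x i)))\<bar> \<partial>Noise \<epsilon>)"
    using integrable[OF g] integrable[OF h] fst_bound(1) snd_bound(1)
    by (intro integral_mono abs_pm_mult_diff_le) auto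
  also have "\<dots> \<le> 4 * measure Omega D"
    using fst_bound snd_bound by simp
  finally show ?thesis .
qed

definition noise_cov :: "real \<Rightarrow> ((nat \<Rightarrow> bool) \<Rightarrow> bool) \<Rightarrow> real" where
  "noise_cov \<epsilon> g = (\<integral>x. pm (g (\<lambda>i. fst (x i))) * pm (g (\<lambda>i. snd (x i))) \<partial>Noise \<epsilon>)
     - (\<integral>\<omega>. pm (g \<omega>) \<partial>Omega)\<^sup>2"

lemma noise_sensitive_iff_noise_cov:
  "noise_sensitive g \<longleftrightarrow> (\<forall>\<epsilon>. 0 < \<epsilon> \<and> \<epsilon> \<le> 1 \<longrightarrow> (\<lambda>n. noise_cov \<epsilon> (g n)) \<longlonglongrightarrow> 0)"
  unfolding noise_sensitive_def noise_cov_def ..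

lemma abs_integral_pm_le_1: "\<bar>\<integral>\<omega>. pm (g \<omega>) \<partial>Omega\<bar> \<le> 1"
  using integral_abs_bound[of Omega "\<lambda>\<omega>. pm (g \<omega>)"] Omega.prob_space by simp

lemma abs_noise_cov_diff_le:
  assumes "boolean_fun g" "boolean_fun h" "D \<in> sets Omega" "\<And>\<omega>. g \<omega> \<noteq> h \<omega> \<Longrightarrow> \<omega> \<in> D"
  shows "\<bar>noise_cov \<epsilon> g - noise_cov \<epsilon> h\<bar> \<le> 8 * measure Omega D"
proof -
  define a b where "a = (\<integral>\<omega>. pm (g \<omega>) \<partial>Omega)" and "b = (\<integral>\<omega>. pm (h \<omega>) \<partial>Omega)"
  have "\<bar>a\<^sup>2 - b\<^sup>2\<bar> = \<bar>a - b\<bar> * \<bar>a + b\<bar>"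
    by (simp add: power2_eq_square abs_mult[symmetric] algebra_simps)
  also have "\<dots> \<le> (2 * measure Omega D) * 2"
    using abs_integral_pm_diff_le[OF assms] abs_integral_pm_le_1[of g] abs_integral_pm_le_1[of h]
    unfolding a_def b_def by (intro mult_mono) auto
  finally show ?thesis
    using abs_integral_noise_correlation_diff_le[OF assms, of \<epsilon>]
    unfolding noise_cov_def a_def[symmetric] b_def[symmetric] by linarith
qed

lemma noise_sensitive_iff_if_noise_cov_diff_tendsto_0:
  assumes "\<And>\<epsilon>. 0 < \<epsilon> \<Longrightarrow> \<epsilon> \<le> 1 \<Longrightarrow> (\<lambda>n. noise_cov \<epsilon> (g n) - noise_cov \<epsilon> (h n)) \<longlonglongrightarrow> 0"
  shows "noise_sensitive g \<longleftrightarrow> noise_sensitive h"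
  unfolding noise_sensitive_iff_noise_cov
proof (intro iff_allI imp_cong refl iffI)
  fix \<epsilon> :: real assume \<epsilon>: "0 < \<epsilon> \<and> \<epsilon> \<le> 1"
  note diff = assms[OF conjunct1[OF \<epsilon>] conjunct2[OF \<epsilon>]]
  show "(\<lambda>n. noise_cov \<epsilon> (h n)) \<longlonglongrightarrow> 0" if "(\<lambda>n. noise_cov \<epsilon> (g n)) \<longlonglongrightarrow> 0"
    using tendsto_diff[OF that diff] by simp
  show "(\<lambda>n. noise_cov \<epsilon> (g n)) \<longlonglongrightarrow> 0" if "(\<lambda>n. noise_cov \<epsilon> (h n)) \<longlonglongrightarrow> 0"
    using tendsto_add[OF that diff] by simp
qed

lemma noise_cov_B_approximation:
  assumes "\<And>n. boolean_fun (f n)" and "\<And>n. finitary (f n)"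
  obtains M :: "nat \<Rightarrow> nat"
  where "\<And>m \<epsilon>. (\<And>n. M n \<le> m n) \<Longrightarrow>
      (\<lambda>n. noise_cov \<epsilon> (B (m n) (f n)) - noise_cov \<epsilon> (f n)) \<longlonglongrightarrow> 0"
proof -
  have "\<forall>n. \<exists>M. \<forall>m\<ge>M. measure Omega (- witness_event (f n) m) < inverse (Suc n)"
  proof
    fix n
    have "eventually (\<lambda>m. measure Omega (- witness_event (f n) m) < inverse (Suc n)) sequentially"
      by (rule order_tendstoD(2)[OF measure_not_witness_event_tendsto_0[OF assms]]) simp
    then show "\<exists>M. \<forall>m\<ge>M. measure Omega (- witness_event (f n) m) < inverse (Suc n)"
      unfolding eventually_sequentially .
  qed
  from choice[OF this] obtain M
    where M: "\<And>n m. M n \<le> m \<Longrightarrow> measure Omega (- witness_event (f n) m) < inverse (Suc n)"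
    by blast
  have close: "\<bar>noise_cov \<epsilon> (B m (f n)) - noise_cov \<epsilon> (f n)\<bar> \<le> 8 * inverse (Suc n)"
    if "M n \<le> m" for \<epsilon> m n
  proof -
    have "- witness_event (f n) m \<in> sets Omega"
      using sets.compl_sets[OF sets_witness_event[OF assms(1)]] by (simp add: Compl_eq_Diff_UNIV)
    then have "\<bar>noise_cov \<epsilon> (B m (f n)) - noise_cov \<epsilon> (f n)\<bar> \<le> 8 * measure Omega (- witness_event (f n) m)"
      by (intro abs_noise_cov_diff_le boolean_fun_B assms(1)) (auto simp: B_eq_if_witness_event)
    also have "\<dots> \<le> 8 * inverse (Suc n)"
      using M[OF that] by simp
    finally show ?thesis .
  qed
  show thesis
  proof (rule that)
    fix m :: "nat \<Rightarrow> nat" and \<epsilon> assume "\<And>n. M n \<le> m n"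
    then have "\<forall>n. norm (noise_cov \<epsilon> (B (m n) (f n)) - noise_cov \<epsilon> (f n)) \<le> 8 * inverse (Suc n)"
      using close by simp
    then show "(\<lambda>n. noise_cov \<epsilon> (B (m n) (f n)) - noise_cov \<epsilon> (f n)) \<longlonglongrightarrow> 0"
      by (rule Lim_null_comparison[OF always_eventually tendsto_mult_right_zero[OF LIMSEQ_inverse_real_of_nat]])
  qed
qed

lemma noise_sensitive_B_iff_eventually:
  assumes "\<And>n. boolean_fun (f n)" and "\<And>n. finitary (f n)"
  obtains M :: "nat \<Rightarrow> nat"
  where "\<And>m. (\<And>n. M n \<le> m n) \<Longrightarrow> noise_sensitive (\<lambda>n. B (m n) (f n)) \<longleftrightarrow> noise_sensitive f"
proof -
  obtain M where M: "\<And>m \<epsilon>. (\<And>n. M n \<le> m n) \<Longrightarrow>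
      (\<lambda>n. noise_cov \<epsilon> (B (m n) (f n)) - noise_cov \<epsilon> (f n)) \<longlonglongrightarrow> 0"
    using noise_cov_B_approximation[of f] assms by blast
  show thesis
    by (rule that[of M], rule noise_sensitive_iff_if_noise_cov_diff_tendsto_0, rule M)
qed

theorem mainTheorem9:
  fixes f :: "nat \<Rightarrow> (nat \<Rightarrow> bool) \<Rightarrow> bool"
  assumes "\<And>n. boolean_fun (f n)"
    and "\<And>n. finitary (f n)"
  shows "(\<exists>r :: nat \<Rightarrow> nat. filterlim r at_top sequentially \<and>
            (\<forall>m :: nat \<Rightarrow> nat. (\<forall>n. r n \<le> m n) \<longrightarrow>
               noise_sensitive (\<lambda>n. B (m n) (f n))))
         \<longleftrightarrow> noise_sensitive f"
proof -
  obtain M where B_iff: "\<And>m. (\<And>n. M n \<le> m n) \<Longrightarrow>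
      noise_sensitive (\<lambda>n. B (m n) (f n)) \<longleftrightarrow> noise_sensitive f"
    using noise_sensitive_B_iff_eventually[of f] assms by blast
  show ?thesis
  proof
    assume "\<exists>r. filterlim r at_top sequentially \<and>
        (\<forall>m. (\<forall>n. r n \<le> m n) \<longrightarrow> noise_sensitive (\<lambda>n. B (m n) (f n)))"
    then obtain r where "\<And>m. \<forall>n. r n \<le> m n \<Longrightarrow> noise_sensitive (\<lambda>n. B (m n) (f n))"
      by blast
    then show "noise_sensitive f"
      using B_iff[of "\<lambda>n. max (r n) (M n)"] by simp
  next
    assume "noise_sensitive f"
    moreover have "filterlim (\<lambda>n. M n + n) at_top sequentially"
      by (rule filterlim_at_top_mono[OF filterlim_ident]) simp
    ultimately show "\<exists>r. filterlim r at_top sequentially \<and>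
        (\<forall>m. (\<forall>n. r n \<le> m n) \<longrightarrow> noise_sensitive (\<lambda>n. B (m n) (f n)))"
      using B_iff by (intro exI[of _ "\<lambda>n. M n + n"]) (meson le_add1 order_trans)
  qed
qed

end
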